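(* Let $\mathcal{T}$ be a teacher class over $\mathcal{X},\mathcal{Y},\Phi$ and $H$ a non-empty history consistent with $\mathcal{T}$, and let $N$ be the number of labels $y\in\mathcal{Y}$ that do not appear in any pair of $H$. Then \[\mathrm{Ldim}(\mathrm{DtO}(\mathcal{T},H))\geq\mathrm{DFFdim}(\mathcal{T},H)-N.\]
   Context: Setting. A teacher over $\mathcal{X},\mathcal{Y},\Phi$ ($\mathcal{Y}$ finite, $\Phi$ a set of Boolean features on $\mathcal{X}$, $\bot$ a null symbol) is a pair $T=(\ell,\psi)$ with $\ell:\mathcal{X}\to\mathcal{Y}$ and $\psi:\mathcal{X}\times\mathcal{X}\to\Phi\cup\{\bot\}$ such that whenever $\ell(x)\neq\ell(\hat x)$, $\phi:=\psi(x,\hat x)\in\Phi$, $\phi(x)=1$ and $\phi(\hat x)=0$. A teacher class is a set of teachers. A history is a non-empty set $H\subseteq\mathcal{X}\times\mathcal{Y}$, $H_{\mathcal{X}}=\{x:\exists y,(x,y)\in H\}$; a teacher $(\ell,\psi)$ is consistent with $H$ if $\ell(x)=y$ for all $(x,y)\in H$; $\mathcal{T}_H$ is the set of teachers in $\mathcal{T}$ consistent with $H$, and $\mathcal{T}$ is consistent with $H$ if $\mathcal{T}_H\neq\emptyset$. DFF dimension. A DFF tree is a rooted tree whose nodes are triples $\langle y,\phi,x\rangle$ with $y\in\mathcal{Y}\cup\{\bot\}$, $\phi\in\Phi\cup\{\bot\}$, $x\in\mathcal{X}\cup\{\bot\}$, such that the root has $y=\phi=\bot$, a node has $x=\bot$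 iff it is a leaf, every edge is labeled by a pair $(\hat x,\hat y)\in\mathcal{X}\times\mathcal{Y}$, and every non-root node $\langle y,\phi,x\rangle$ with incoming edge $(\hat x,\hat y)$ has $\phi\neq\bot$ whenever $y\neq\hat y$. For a parent–child pair $\langle\cdot,\cdot,x\rangle\xrightarrow{(\hat x,\hat y)}\langle y,\phi,\cdot\rangle$ on a path, $(x,y)$ is called a labeled example in that path. A path from the root is consistent with a teacher $(\ell,\psi)$ if for every such parent–child pair on it, $\ell(x)=y$ and, if $y\neq\hat y$, $\psi(x,\hat x)=\phi$. Given $\mathcal{T}$ consistent with $H$, a DFF tree is shattered by $\mathcal{T}$ and $H$ if: (1) every non-root node $\langle y,\phi,x\rangle$ with incoming edge $(\hat x,\hat y)$ has $y\neq\hat y$; (2) the labels of the outgoing edges of each non-leaf node $v$ are exactly the pairs that belong to $H$ or are labeled examples in the path from the root to $v$; (3) every root-to-leaf path is consistent with some teacher in $\mathcal{T}_H$; (4) all root-to-leaf paths have the same number of edges, called the height. $\mathrm{DFFdim}(\mathcal{T},H)$ is the maximal height of a DFF tree shattered by $\mathcal{T}$ and $H$. $\mathrm{Ldim}$ is the (multiclass) Littlestone dimension: the maximal depth of a complete binary tree whose internal nodes are labeled by examples and whose two outgoing edges at each internal node are labeled by two distinct labels, such that for every root-to-leaf path some function in the class agrees with all (example, edge label) pairs on the path. Mapping DtO: given $\mathcal{T}$ and $H$, let $\mathcal{X}''=\mathcal{X}\setminus H_{\mathcal{X}}$; then $\mathrm{DtO}(\mathcal{T},H)=\{\ell|_{\mathcal{X}''}:(\ell,\psi)\in\mathcal{T}\}$.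 *)

theory Defs
  imports Main "HOL-Library.Extended_Nat" "HOL-Library.FuncSet"
begin

text \<open>Conventions: the instance space X is the type 'x, the label set Y is the
  finite type 'y, Boolean features are predicates 'x \<Rightarrow> bool, and the null
  symbol \<bottom> is modelled by None of the option type.\<close>

type_synonym ('x,'y) teacher = "('x \<Rightarrow> 'y) \<times> ('x \<Rightarrow> 'x \<Rightarrow> ('x \<Rightarrow> bool) option)"

definition is_teacher :: "('x \<Rightarrow> bool) set \<Rightarrow> ('x,'y) teacher \<Rightarrow> bool" where
  "is_teacher \<Phi> T \<longleftrightarrow>
     (\<forall>x x' \<phi>. snd T x x' = Some \<phi> \<longrightarrow> \<phi> \<in> \<Phi>) \<and>
     (\<forall>x x'. fst T x \<noteq> fst T x' \<longrightarrow>
        (\<exists>\<phi>. snd T x x' = Some \<phi> \<and> \<phi> \<in> \<Phi> \<and> \<phi> x \<and> \<not> \<phi> x'))"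

definition teacher_class :: "('x \<Rightarrow> bool) set \<Rightarrow> ('x,'y) teacher set \<Rightarrow> bool" where
  "teacher_class \<Phi> TT \<longleftrightarrow> (\<forall>T\<in>TT. is_teacher \<Phi> T)"

definition consistent_with :: "('x,'y) teacher \<Rightarrow> ('x \<times> 'y) set \<Rightarrow> bool" where
  "consistent_with T H \<longleftrightarrow> (\<forall>(x,y)\<in>H. fst T x = y)"

definition TH :: "('x,'y) teacher set \<Rightarrow> ('x \<times> 'y) set \<Rightarrow> ('x,'y) teacher set" where
  "TH TT H = {T \<in> TT. consistent_with T H}"

definition hist_X :: "('x \<times> 'y) set \<Rightarrow> 'x set" where
  "hist_X H = fst ` H"

text \<open>A node is a triple (y, phi, x); its outgoing edges are indexed by their labels
  (pairs in X \<times> Y), the child along edge e being given by the partial map.\<close>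

datatype ('x,'y) dff =
  DNode "'y option" "('x \<Rightarrow> bool) option" "'x option" "'x \<times> 'y \<Rightarrow> ('x,'y) dff option"

text \<open>A walk from a node records, for each edge: the parent's x, the edge label,
  and the child's y and phi.\<close>

inductive dff_walk ::
  "('x,'y) dff \<Rightarrow> ('x option \<times> ('x \<times> 'y) \<times> 'y option \<times> ('x \<Rightarrow> bool) option) list
     \<Rightarrow> ('x,'y) dff \<Rightarrow> bool" where
  walk_nil: "dff_walk t [] t"
| walk_cons: "c e = Some (DNode y' f' x' c') \<Longrightarrow> dff_walk (DNode y' f' x' c') ws s
     \<Longrightarrow> dff_walk (DNode y f x c) ((x, e, y', f') # ws) s"

definition dff_is_leaf :: "('x,'y) dff \<Rightarrow> bool" where
  "dff_is_leaf t \<longleftrightarrow> (case t of DNode y f x c \<Rightarrow> (\<forall>e. c e = None))"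

definition dff_tree :: "('x,'y) dff \<Rightarrow> bool" where
  "dff_tree t \<longleftrightarrow>
     (\<exists>x c. t = DNode None None x c) \<and>
     (\<forall>ws y f x c. dff_walk t ws (DNode y f x c) \<longrightarrow> (x = None \<longleftrightarrow> (\<forall>e. c e = None))) \<and>
     (\<forall>ws s. dff_walk t ws s \<longrightarrow>
        (\<forall>(xp, (xh, yh), y, f) \<in> set ws. y \<noteq> Some yh \<longrightarrow> f \<noteq> None))"

text \<open>Labeled examples (x, y) in a path: x of the parent, y of the child.\<close>

definition lab_ex ::
  "('x option \<times> ('x \<times> 'y) \<times> 'y option \<times> ('x \<Rightarrow> bool) option) list \<Rightarrow> ('x option \<times> 'y option) set" where
  "lab_ex ws = (\<lambda>(xp, e, y, f). (xp, y)) ` set ws"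

definition dff_shattered :: "('x,'y) teacher set \<Rightarrow> ('x \<times> 'y) set \<Rightarrow> ('x,'y) dff \<Rightarrow> nat \<Rightarrow> bool" where
  "dff_shattered TT H t h \<longleftrightarrow>
     dff_tree t \<and>
     \<comment> \<open>(1)\<close>
     (\<forall>ws s. dff_walk t ws s \<longrightarrow> (\<forall>(xp, (xh, yh), y, f) \<in> set ws. y \<noteq> Some yh)) \<and>
     \<comment> \<open>(2)\<close>
     (\<forall>ws y f x c. dff_walk t ws (DNode y f x c) \<and> \<not> dff_is_leaf (DNode y f x c) \<longrightarrow>
        (\<lambda>(a,b). (Some a, Some b)) ` {e. c e \<noteq> None}
          = (\<lambda>(a,b). (Some a, Some b)) ` H \<union> lab_ex ws) \<and>
     \<comment> \<open>(3)\<close>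
     (\<forall>ws s. dff_walk t ws s \<and> dff_is_leaf s \<longrightarrow>
        (\<exists>(l, \<psi>) \<in> TH TT H. \<forall>(xp, (xh, yh), y, f) \<in> set ws.
            \<exists>a. xp = Some a \<and> y = Some (l a) \<and> (y \<noteq> Some yh \<longrightarrow> \<psi> a xh = f))) \<and>
     \<comment> \<open>(4)\<close>
     (\<forall>ws s. dff_walk t ws s \<and> dff_is_leaf s \<longrightarrow> length ws = h)"

definition DFFdim :: "('x,'y) teacher set \<Rightarrow> ('x \<times> 'y) set \<Rightarrow> enat" where
  "DFFdim TT H = Sup {enat h | h. \<exists>t. dff_shattered TT H t h}"

datatype ('x,'y) ltree = LLeaf | LNode 'x 'y "('x,'y) ltree" 'y "('x,'y) ltree"

fun lt_ok :: "'x set \<Rightarrow> ('x,'y) ltree \<Rightarrow> nat \<Rightarrow> bool" where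
  "lt_ok D LLeaf d \<longleftrightarrow> d = 0"
| "lt_ok D (LNode x y1 l y2 r) d \<longleftrightarrow>
     (\<exists>d'. d = Suc d' \<and> x \<in> D \<and> y1 \<noteq> y2 \<and> lt_ok D l d' \<and> lt_ok D r d')"

fun lt_paths :: "('x,'y) ltree \<Rightarrow> ('x \<times> 'y) list set" where
  "lt_paths LLeaf = {[]}"
| "lt_paths (LNode x y1 l y2 r) = (#) (x, y1) ` lt_paths l \<union> (#) (x, y2) ` lt_paths r"

definition lt_shattered :: "'x set \<Rightarrow> ('x \<Rightarrow> 'y) set \<Rightarrow> ('x,'y) ltree \<Rightarrow> nat \<Rightarrow> bool" where
  "lt_shattered D F t d \<longleftrightarrow> lt_ok D t d \<and> (\<forall>p \<in> lt_paths t. \<exists>f\<in>F. \<forall>(x,y)\<in>set p. f x = y)"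

definition Ldim :: "'x set \<Rightarrow> ('x \<Rightarrow> 'y) set \<Rightarrow> enat" where
  "Ldim D F = Sup {enat d | d. \<exists>t. lt_shattered D F t d}"

definition DtO_dom :: "('x \<times> 'y) set \<Rightarrow> 'x set" where
  "DtO_dom H = UNIV - hist_X H"

definition DtO :: "('x,'y) teacher set \<Rightarrow> ('x \<times> 'y) set \<Rightarrow> ('x \<Rightarrow> 'y) set" where
  "DtO TT H = (\<lambda>T. restrict (fst T) (DtO_dom H)) ` TT"

end

theory Submission
  imports Defs
begin

(* Walk down a DFF tree shattered by TT and H, building a Littlestone tree for DtO(TT, H) on the way.
   Every child of an internal node with instance x carries the label l x of some teacher (l, psi)
   consistent with H, and differs from the label of its incoming edge; as the outgoing edges include
   all of H, this forces x outside H_X. If two children carry distinct labels, x becomes a Littlestone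
   node with these two labels on its edges. If all children carry the same label a, then a is fresh
   (it occurs neither in H nor among the labeled examples met so far), since an edge (x', a) would
   lead to a child labelled differently; we then descend without branching, and a stops being fresh.
   Hence at most N levels of the DFF tree are lost, and every Littlestone path consists of labeled
   examples of a single root-to-leaf path, which a teacher in TT_H labels correctly. *)

type_synonym ('x, 'y) dff_path = "('x option \<times> ('x \<times> 'y) \<times> 'y option \<times> ('x \<Rightarrow> bool) option) list"

definition path_examples :: "('x, 'y) dff_path \<Rightarrow> ('x \<times> 'y) set" where
  "path_examples ws = {(a, b). (Some a, Some b) \<in> lab_ex ws}"

definition fresh_labels :: "('x \<times> 'y) set \<Rightarrow> ('x, 'y) dff_path \<Rightarrow> 'y set" where
  "fresh_labels H ws = {b. \<forall>a. (a, b) \<notin> H \<union> path_examples ws}"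

definition realized_below :: "('x, 'y) dff \<Rightarrow> ('x \<times> 'y) list \<Rightarrow> bool" where
  "realized_below s p \<longleftrightarrow> (\<exists>ws u. dff_walk s ws u \<and> dff_is_leaf u \<and> set p \<subseteq> path_examples ws)"

lemma path_examples_iff: "(a, b) \<in> path_examples ws \<longleftrightarrow> (\<exists>e f. (Some a, e, Some b, f) \<in> set ws)"
  unfolding path_examples_def lab_ex_def by (auto intro: rev_image_eqI)

lemma path_examples_Cons_subset: "path_examples ws \<subseteq> path_examples (z # ws)"
  unfolding path_examples_def lab_ex_def by (auto intro: rev_image_eqI)

lemma path_examples_Cons:
  "path_examples ((Some x, e, Some a, f) # ws) = insert (x, a) (path_examples ws)"
  by (auto simp: path_examples_def lab_ex_def)

lemma path_examples_snoc:
  "path_examples (ws @ [(Some x, e, Some a, f)]) = insert (x, a) (path_examples ws)"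
  by (auto simp: path_examples_def lab_ex_def)

lemma fresh_labels_Nil: "fresh_labels H [] = {y. \<forall>x. (x, y) \<notin> H}"
  by (simp add: fresh_labels_def path_examples_def lab_ex_def)

lemma fresh_labels_snoc:
  "fresh_labels H (ws @ [(Some x, e, Some a, f)]) = fresh_labels H ws - {a}"
  by (auto simp: fresh_labels_def path_examples_snoc)

lemma dff_walk_append: "dff_walk t ws s \<Longrightarrow> dff_walk s ws' u \<Longrightarrow> dff_walk t (ws @ ws') u"
  by (induction rule: dff_walk.induct) (auto intro: dff_walk.intros)

lemma dff_walk_snoc:
  "dff_walk t ws (DNode y f x c) \<Longrightarrow> c e = Some (DNode y' f' x' c') \<Longrightarrow>
   dff_walk t (ws @ [(x, e, y', f')]) (DNode y' f' x' c')"
  by (erule dff_walk_append) (auto intro: dff_walk.intros)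

lemma dff_is_leaf_iff: "dff_is_leaf (DNode y f x c) \<longleftrightarrow> (\<forall>e. c e = None)"
  by (simp add: dff_is_leaf_def)

lemma not_dff_is_leaf_if_child: "c e = Some ch \<Longrightarrow> \<not> dff_is_leaf (DNode y f x c)"
  by (metis dff_is_leaf_iff option.distinct(1))

lemma dff_walk_to_leaf: "\<exists>ws u. dff_walk s ws u \<and> dff_is_leaf u"
proof (induction s)
  case (DNode y f x c)
  show ?case
  proof (cases "dff_is_leaf (DNode y f x c)")
    case True
    then show ?thesis by (blast intro: dff_walk.walk_nil)
  next
    case False
    then obtain e ch where edge: "c e = Some ch"
      by (metis dff_is_leaf_iff not_None_eq)
    have "ch \<in> set_option (c e)"
      using edge by simp
    then obtain ws u where "dff_walk ch ws u" "dff_is_leaf u"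
      using DNode.IH[OF rangeI] by blast
    with edge show ?thesis
      by (cases ch) (blast intro: dff_walk.walk_cons)
  qed
qed

lemma realized_below_Nil: "realized_below s []"
  using dff_walk_to_leaf by (auto simp: realized_below_def)

lemma realized_below_child:
  assumes "c e = Some (DNode y' f' x' c')" "realized_below (DNode y' f' x' c') p"
  shows "realized_below (DNode y f x c) p"
  using assms path_examples_Cons_subset unfolding realized_below_def
  by (blast intro: dff_walk.walk_cons)

lemma realized_below_child_Cons:
  assumes "c e = Some (DNode (Some a) f' x' c')" "realized_below (DNode (Some a) f' x' c') p"
  shows "realized_below (DNode y f (Some x) c) ((x, a) # p)"
  using assms unfolding realized_below_def
  by (fastforce simp: path_examples_Cons intro: dff_walk.walk_cons)

lemma dff_shattered_label_ne:
  assumes "dff_shattered TT H t h" "dff_walk t ws s" "(xp, (xh, yh), y, f) \<in> set ws"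
  shows "y \<noteq> Some yh"
  using assms unfolding dff_shattered_def by fast

lemma dff_shattered_out_edges:
  assumes "dff_shattered TT H t h" "dff_walk t ws (DNode y f x c)" "\<not> dff_is_leaf (DNode y f x c)"
  shows "{e. c e \<noteq> None} = H \<union> path_examples ws"
proof -
  let ?lift = "\<lambda>(a, b). (Some a, Some b)"
  have "\<forall>ws y f x c. dff_walk t ws (DNode y f x c) \<and> \<not> dff_is_leaf (DNode y f x c) \<longrightarrow>
      ?lift ` {e. c e \<noteq> None} = ?lift ` H \<union> lab_ex ws"
    using assms(1) unfolding dff_shattered_def by (elim conjE) assumption
  then have "?lift ` {e. c e \<noteq> None} = ?lift ` H \<union> lab_ex ws"
    using assms(2,3) by blast
  moreover have lift_mem: "(Some a, Some b) \<in> ?lift ` A \<longleftrightarrow> (a, b) \<in> A" for a b A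
    by force
  ultimately have "(a, b) \<in> {e. c e \<noteq> None} \<longleftrightarrow> (a, b) \<in> H \<or> (Some a, Some b) \<in> lab_ex ws" for a b
    by (metis Un_iff lift_mem)
  then show ?thesis
    unfolding path_examples_def by auto
qed

lemma dff_shattered_leaf_teacher:
  assumes "dff_shattered TT H t h" "dff_walk t ws s" "dff_is_leaf s"
  shows "\<exists>(l, \<psi>) \<in> TH TT H. \<forall>(xp, (xh, yh), y, f) \<in> set ws.
            \<exists>a. xp = Some a \<and> y = Some (l a) \<and> (y \<noteq> Some yh \<longrightarrow> \<psi> a xh = f)"
proof -
  have "\<forall>ws s. dff_walk t ws s \<and> dff_is_leaf s \<longrightarrow>
        (\<exists>(l, \<psi>) \<in> TH TT H. \<forall>(xp, (xh, yh), y, f) \<in> set ws.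
            \<exists>a. xp = Some a \<and> y = Some (l a) \<and> (y \<noteq> Some yh \<longrightarrow> \<psi> a xh = f))"
    using assms(1) unfolding dff_shattered_def by (elim conjE) assumption
  then show ?thesis
    using assms(2,3) by blast
qed

lemma dff_shattered_leaf_depth:
  assumes "dff_shattered TT H t h" "dff_walk t ws s" "dff_is_leaf s"
  shows "length ws = h"
  using assms unfolding dff_shattered_def by blast

lemma dff_shattered_internal_instance:
  assumes "dff_shattered TT H t h" "dff_walk t ws (DNode y f x c)" "\<not> dff_is_leaf (DNode y f x c)"
  shows "\<exists>a. x = Some a"
proof -
  have "dff_tree t"
    using assms(1) unfolding dff_shattered_def by (rule conjunct1)
  then have "x = None \<longleftrightarrow> (\<forall>e. c e = None)"
    using assms(2) unfolding dff_tree_def by blast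
  with assms(3) show ?thesis
    by (auto simp: dff_is_leaf_def)
qed

lemma dff_shattered_child_label:
  assumes sh: "dff_shattered TT H t h" and walk: "dff_walk t ws (DNode y f (Some x) c)"
    and edge: "c e = Some (DNode y' f' x' c')"
  shows "\<exists>(l, \<psi>) \<in> TH TT H. y' = Some (l x)"
proof -
  obtain ws' u where below: "dff_walk (DNode y' f' x' c') ws' u" and leaf: "dff_is_leaf u"
    using dff_walk_to_leaf by blast
  have "dff_walk t ((ws @ [(Some x, e, y', f')]) @ ws') u"
    using dff_walk_append[OF dff_walk_snoc[OF walk edge] below] .
  from dff_shattered_leaf_teacher[OF sh this leaf] show ?thesis
    by (cases e) force
qed

lemma dff_shattered_child_label_ne:
  assumes sh: "dff_shattered TT H t h" and walk: "dff_walk t ws (DNode y f (Some x) c)"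
    and edge: "c e = Some (DNode y' f' x' c')"
  shows "y' \<noteq> Some (snd e)"
proof -
  obtain a b where e: "e = (a, b)"
    by (cases e)
  then have "(Some x, (a, b), y', f') \<in> set (ws @ [(Some x, e, y', f')])"
    by simp
  from dff_shattered_label_ne[OF sh dff_walk_snoc[OF walk edge] this] e show ?thesis
    by simp
qed

lemma dff_shattered_instance_in_DtO_dom:
  assumes sh: "dff_shattered TT H t h" and walk: "dff_walk t ws (DNode y f (Some x) c)"
    and nonleaf: "\<not> dff_is_leaf (DNode y f (Some x) c)"
  shows "x \<in> DtO_dom H"
proof (rule ccontr)
  assume "x \<notin> DtO_dom H"
  then obtain b where xb: "(x, b) \<in> H"
    by (auto simp: DtO_dom_def hist_X_def)
  then have "c (x, b) \<noteq> None"
    using dff_shattered_out_edges[OF sh walk nonleaf] by blast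
  then obtain y' f' x' c' where edge: "c (x, b) = Some (DNode y' f' x' c')"
    by (metis dff.exhaust not_None_eq)
  from dff_shattered_child_label[OF sh walk edge] obtain l \<psi>
    where "(l, \<psi>) \<in> TH TT H" "y' = Some (l x)"
    by blast
  with xb have "y' = Some b"
    by (auto simp: TH_def consistent_with_def)
  with dff_shattered_child_label_ne[OF sh walk edge] show False
    by simp
qed

lemma dff_shattered_uniform_child_label_fresh:
  assumes sh: "dff_shattered TT H t h" and walk: "dff_walk t ws (DNode y f (Some x) c)"
    and edge: "c e = Some (DNode (Some a) f' x' c')"
    and uniform: "\<And>e y' f' x' c'. c e = Some (DNode y' f' x' c') \<Longrightarrow> y' = Some a"
  shows "a \<in> fresh_labels H ws"
  unfolding fresh_labels_def
proof (intro CollectI allI notI)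
  fix b
  assume "(b, a) \<in> H \<union> path_examples ws"
  moreover have "\<not> dff_is_leaf (DNode y f (Some x) c)"
    using edge by (rule not_dff_is_leaf_if_child)
  ultimately have "c (b, a) \<noteq> None"
    using dff_shattered_out_edges[OF sh walk] by blast
  then obtain y' f'' x'' c'' where edge': "c (b, a) = Some (DNode y' f'' x'' c'')"
    by (metis dff.exhaust not_None_eq)
  then have "y' = Some a"
    by (rule uniform)
  with dff_shattered_child_label_ne[OF sh walk edge'] show False
    by simp
qed

lemma dff_shattered_node_cases:
  assumes sh: "dff_shattered TT H t h" and walk: "dff_walk t ws (DNode y f (Some x) c)"
    and nonleaf: "\<not> dff_is_leaf (DNode y f (Some x) c)"
  obtains (branch) e1 a1 f1 x1 c1 e2 a2 f2 x2 c2
      where "c e1 = Some (DNode (Some a1) f1 x1 c1)" "c e2 = Some (DNode (Some a2) f2 x2 c2)" "a1 \<noteq> a2"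
    | (fresh) e a f' x' c' where "c e = Some (DNode (Some a) f' x' c')" "a \<in> fresh_labels H ws"
proof -
  have labelled: "\<exists>a. y' = Some a" if "c e = Some (DNode y' f' x' c')" for e y' f' x' c'
    using dff_shattered_child_label[OF sh walk that] by blast
  obtain e0 ch0 where "c e0 = Some ch0"
    using nonleaf by (metis dff_is_leaf_iff not_None_eq)
  then obtain a0 f0 x0 c0 where edge0: "c e0 = Some (DNode (Some a0) f0 x0 c0)"
    using labelled by (cases ch0) blast
  show ?thesis
  proof (cases "\<exists>e y' f' x' c'. c e = Some (DNode y' f' x' c') \<and> y' \<noteq> Some a0")
    case True
    then obtain e1 a1 f1 x1 c1 where "c e1 = Some (DNode (Some a1) f1 x1 c1)" "a1 \<noteq> a0"
      using labelled by blast
    then show ?thesis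
      using branch[OF _ edge0] by blast
  next
    case False
    then have "a0 \<in> fresh_labels H ws"
      using dff_shattered_uniform_child_label_fresh[OF sh walk edge0] by blast
    with edge0 show ?thesis
      by (rule fresh)
  qed
qed

lemma dff_shattered_ltree_step:
  fixes H :: "('x \<times> 'y::finite) set"
  assumes sh: "dff_shattered TT H t h" and walk: "dff_walk t ws (DNode y f (Some x) c)"
    and nonleaf: "\<not> dff_is_leaf (DNode y f (Some x) c)"
    and budget: "0 < d" "d \<le> h - length ws - card (fresh_labels H ws)"
    and child_ltree: "\<And>e a f' x' c' d'. c e = Some (DNode (Some a) f' x' c') \<Longrightarrow>
      d' \<le> h - Suc (length ws) - card (fresh_labels H ws - {a}) \<Longrightarrow>
      \<exists>lt. lt_ok (DtO_dom H) lt d' \<and> (\<forall>p \<in> lt_paths lt. realized_below (DNode (Some a) f' x' c') p)"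
  shows "\<exists>lt. lt_ok (DtO_dom H) lt d \<and> (\<forall>p \<in> lt_paths lt. realized_below (DNode y f (Some x) c) p)"
  using sh walk nonleaf
proof (cases rule: dff_shattered_node_cases)
  case (branch e1 a1 f1 x1 c1 e2 a2 f2 x2 c2)
  obtain d' where d: "d = Suc d'"
    using budget(1) gr0_implies_Suc by blast
  have "d' \<le> h - Suc (length ws) - card (fresh_labels H ws - {a})" for a
    using budget(2) d card_Diff1_le[of "fresh_labels H ws" a] by linarith
  then obtain lt1 lt2 where
    "lt_ok (DtO_dom H) lt1 d'" "\<forall>p \<in> lt_paths lt1. realized_below (DNode (Some a1) f1 x1 c1) p"
    "lt_ok (DtO_dom H) lt2 d'" "\<forall>p \<in> lt_paths lt2. realized_below (DNode (Some a2) f2 x2 c2) p"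
    using child_ltree branch(1,2) by meson
  moreover have "x \<in> DtO_dom H"
    using dff_shattered_instance_in_DtO_dom[OF sh walk nonleaf] .
  ultimately have "lt_ok (DtO_dom H) (LNode x a1 lt1 a2 lt2) d \<and>
      (\<forall>p \<in> lt_paths (LNode x a1 lt1 a2 lt2). realized_below (DNode y f (Some x) c) p)"
    using d branch(3) realized_below_child_Cons[where c = c, OF branch(1)]
      realized_below_child_Cons[where c = c, OF branch(2)]
    by auto
  then show ?thesis
    by blast
next
  case (fresh e a f' x' c')
  have "card (fresh_labels H ws) = Suc (card (fresh_labels H ws - {a}))"
    using card.remove[OF finite fresh(2)] .
  then have "d \<le> h - Suc (length ws) - card (fresh_labels H ws - {a})"
    using budget(2) by linarith
  then obtain lt where
    "lt_ok (DtO_dom H) lt d" "\<forall>p \<in> lt_paths lt. realized_below (DNode (Some a) f' x' c') p"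
    using child_ltree[OF fresh(1)] by blast
  then show ?thesis
    using realized_below_child[where c = c, OF fresh(1)] by blast
qed

lemma dff_shattered_ltree_below:
  fixes H :: "('x \<times> 'y::finite) set"
  assumes sh: "dff_shattered TT H t h"
  shows "dff_walk t ws s \<Longrightarrow> d \<le> h - length ws - card (fresh_labels H ws) \<Longrightarrow>
    \<exists>lt. lt_ok (DtO_dom H) lt d \<and> (\<forall>p \<in> lt_paths lt. realized_below s p)"
proof (induction s arbitrary: ws d)
  case (DNode y f xo c)
  show ?case
  proof (cases "d = 0")
    case True
    then have "lt_ok (DtO_dom H) LLeaf d \<and> (\<forall>p \<in> lt_paths LLeaf. realized_below (DNode y f xo c) p)"
      by (simp add: realized_below_Nil)
    then show ?thesis
      by blast
  next
    case False
    then have "\<not> dff_is_leaf (DNode y f xo c)"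
      using dff_shattered_leaf_depth[OF sh DNode.prems(1)] DNode.prems(2) by auto
    moreover obtain x where xo: "xo = Some x"
      using dff_shattered_internal_instance[OF sh DNode.prems(1) calculation] by blast
    ultimately have nonleaf: "\<not> dff_is_leaf (DNode y f (Some x) c)"
      and walk: "dff_walk t ws (DNode y f (Some x) c)"
      using DNode.prems(1) by simp_all
    have "\<exists>lt. lt_ok (DtO_dom H) lt d' \<and>
        (\<forall>p \<in> lt_paths lt. realized_below (DNode (Some a) f' x' c') p)"
      if edge: "c e = Some (DNode (Some a) f' x' c')"
        and budget: "d' \<le> h - Suc (length ws) - card (fresh_labels H ws - {a})"
      for e a f' x' c' d'
    proof -
      have "DNode (Some a) f' x' c' \<in> set_option (c e)"
        using edge by simp
      moreover have "dff_walk t (ws @ [(Some x, e, Some a, f')]) (DNode (Some a) f' x' c')"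
        using dff_walk_snoc[OF walk edge] .
      moreover have "d' \<le> h - length (ws @ [(Some x, e, Some a, f')])
          - card (fresh_labels H (ws @ [(Some x, e, Some a, f')]))"
        using budget by (simp add: fresh_labels_snoc)
      ultimately show ?thesis
        by (rule DNode.IH[OF rangeI])
    qed
    with dff_shattered_ltree_step[OF sh walk nonleaf] False DNode.prems(2) show ?thesis
      unfolding xo by blast
  qed
qed

lemma dff_shattered_realized_path_agrees:
  assumes sh: "dff_shattered TT H t h" and realized: "realized_below t p"
    and dom: "\<forall>(a, b) \<in> set p. a \<in> DtO_dom H"
  shows "\<exists>g \<in> DtO TT H. \<forall>(a, b) \<in> set p. g a = b"
proof -
  obtain ws u where walk: "dff_walk t ws u" and leaf: "dff_is_leaf u"
    and examples: "set p \<subseteq> path_examples ws"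
    using realized unfolding realized_below_def by blast
  obtain l \<psi> where teacher: "(l, \<psi>) \<in> TH TT H" and agrees: "\<forall>(xp, (xh, yh), y, f) \<in> set ws.
      \<exists>a. xp = Some a \<and> y = Some (l a) \<and> (y \<noteq> Some yh \<longrightarrow> \<psi> a xh = f)"
    using dff_shattered_leaf_teacher[OF sh walk leaf] by blast
  have "restrict l (DtO_dom H) \<in> DtO TT H"
    unfolding DtO_def by (rule image_eqI[where x = "(l, \<psi>)"]) (use teacher in \<open>simp_all add: TH_def\<close>)
  moreover have "l a = b" if example: "(a, b) \<in> path_examples ws" for a b
  proof -
    obtain e f where "(Some a, e, Some b, f) \<in> set ws"
      using example unfolding path_examples_iff by blast
    from bspec[OF agrees this] show ?thesis
      by (cases e) simp
  qed
  then have "\<forall>(a, b) \<in> set p. restrict l (DtO_dom H) a = b"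
    using examples dom by (fastforce simp: subset_iff)
  ultimately show ?thesis
    by blast
qed

lemma lt_paths_in_domain: "lt_ok D lt d \<Longrightarrow> p \<in> lt_paths lt \<Longrightarrow> (a, b) \<in> set p \<Longrightarrow> a \<in> D"
  by (induction D lt d arbitrary: p rule: lt_ok.induct) auto

lemma dff_shattered_height_le_Ldim:
  fixes H :: "('x \<times> 'y::finite) set"
  assumes sh: "dff_shattered TT H t h"
  shows "enat (h - card {y. \<forall>x. (x, y) \<notin> H}) \<le> Ldim (DtO_dom H) (DtO TT H)"
proof -
  let ?d = "h - card {y. \<forall>x. (x, y) \<notin> H}"
  obtain lt where lt: "lt_ok (DtO_dom H) lt ?d" and realized: "\<forall>p \<in> lt_paths lt. realized_below t p"
    using dff_shattered_ltree_below[OF sh dff_walk.walk_nil, of ?d] by (auto simp: fresh_labels_Nil)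
  have "lt_shattered (DtO_dom H) (DtO TT H) lt ?d"
    unfolding lt_shattered_def
  proof (intro conjI ballI)
    fix p
    assume "p \<in> lt_paths lt"
    with realized lt_paths_in_domain[OF lt] show "\<exists>g \<in> DtO TT H. \<forall>(a, b) \<in> set p. g a = b"
      by (intro dff_shattered_realized_path_agrees[OF sh]) auto
  qed (rule lt)
  then show ?thesis
    unfolding Ldim_def by (blast intro: Sup_upper)
qed

lemma enat_diff_le_iff: "a - enat n \<le> b \<longleftrightarrow> a \<le> b + enat n"
  by (cases a; cases b) auto

theorem mainTheorem10:
  fixes \<Phi> :: "('x \<Rightarrow> bool) set"
    and TT :: "('x, 'y::finite) teacher set"
    and H :: "('x \<times> 'y) set"
  assumes "teacher_class \<Phi> TT"
    and "H \<noteq> {}"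
    and "TH TT H \<noteq> {}"
  shows "Ldim (DtO_dom H) (DtO TT H) \<ge> DFFdim TT H - enat (card {y. \<forall>x. (x, y) \<notin> H})"
proof -
  let ?N = "card {y. \<forall>x. (x, y) \<notin> H}" and ?L = "Ldim (DtO_dom H) (DtO TT H)"
  have "enat h \<le> ?L + enat ?N" if "dff_shattered TT H t h" for t h
    using dff_shattered_height_le_Ldim[OF that] enat_diff_le_iff[of "enat h" ?N] by simp
  then have "DFFdim TT H \<le> ?L + enat ?N"
    unfolding DFFdim_def by (blast intro: Sup_least)
  then show ?thesis
    by (simp add: enat_diff_le_iff)
qed

end
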